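(* Consider the descriptor system $Ex_{k+1}=Ax_k+Bu_k+w_k$, $y_k=Hx_k+v_{k-1}$ with $E,A\in\mathbb{R}^{n_1\times n}$, $B\in\mathbb{R}^{n_1\times q}$, $H\in\mathbb{R}^{m\times n}$, where $\begin{bmatrix}E^T&H^T\end{bmatrix}^T$ has full column rank, and let $P_0,Q,R$ be symmetric positive definite, $P_0^{(-)}=AP_0A^T+Q$. Let $\bar x_0$, inputs $u_0,\dots,u_{T-1}$, measurements $y_1,\dots,y_T$ be given, and let $N$ be an integer with $1\le N\le T-1$. Define the full information objective $$J_T(x_1,\dots,x_T)=\|Ex_1-A\bar x_0-Bu_0\|^2_{P_0^{(-)}}+\sum_{k=1}^{T-1}\|Ex_{k+1}-Ax_k-Bu_k\|_Q^2+\sum_{k=1}^{T}\|y_k-Hx_k\|_R^2.$$ Let $\hat x_k^{(+)},P_k^{(+)},P_k^{(-)}$ be given by the recursion in the context, and for $k\ge1$ define $$\Gamma_k^{sm}=\big((P_k^{(+)})^{-1}+A^TQ^{-1}A\big)^{-1},\qquad \hat x_k^{sm}(x_{k+1})=\hat x_k^{(+)}+\Gamma_k^{sm}A^TQ^{-1}\big(Ex_{k+1}-A\hat x_k^{(+)}-Bu_k\big),$$ and $$SC(\{x_k\}_{T-N}^T)=\|Ex_{T-N}-A\hat x^{(+)}_{T-N-1}-Bu_{T-N-1}\|^2_{P^{(-)}_{T-N-1}}+\sum_{k=T-N}^{T-1}\|Ex_{k+1}-Ax_k-Bu_k\|_Q^2+\sum_{k=T-N}^{T}\|y_k-Hx_k\|_R^2.$$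 Then there is a constant $c$ independent of $x_1,\dots,x_T$ such that for all $x_1,\dots,x_T\in\mathbb{R}^n$, $$J_T(x_1,\dots,x_T)=\sum_{k=1}^{T-N-1}\|x_k-\hat x_k^{sm}(x_{k+1})\|^2_{\Gamma_k^{sm}}+SC(\{x_k\}_{T-N}^T)+c.$$ In particular, the full information problem of minimizing $J_T$ subject to any constraints on $x_1,\dots,x_T$ is equivalent to minimizing the right-hand side subject to the same constraints.
   Context: Notation: for symmetric positive definite $S$, $\|z\|_S^2:=z^TS^{-1}z$. Recursion: $\hat x_0^{(+)}=\bar x_0$, $P_0^{(+)}=P_0$, $P_0^{(-)}=AP_0A^T+Q$, and for $k\ge1$: $P_k^{(+)}=(E^T(P_{k-1}^{(-)})^{-1}E+H^TR^{-1}H)^{-1}$, $P_k^{(-)}=AP_k^{(+)}A^T+Q$, $\hat x_k^{(+)}=P_k^{(+)}H^TR^{-1}y_k+P_k^{(+)}E^T(P_{k-1}^{(-)})^{-1}(A\hat x_{k-1}^{(+)}+Bu_{k-1})$. An empty sum is zero. *)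

theory Defs
  imports "HOL-Analysis.Analysis"
begin

definition spd :: "real^'n^'n \<Rightarrow> bool" where
  "spd S \<longleftrightarrow> transpose S = S \<and> (\<forall>z. z \<noteq> 0 \<longrightarrow> z \<bullet> (S *v z) > 0)"

definition wnorm :: "real^'n^'n \<Rightarrow> real^'n \<Rightarrow> real" where
  "wnorm S z = z \<bullet> (matrix_inv S *v z)"

definition stack :: "real^'n^'a \<Rightarrow> real^'n^'b \<Rightarrow> real^'n^('a + 'b)" where
  "stack E H = (\<chi> i. case i of Inl a \<Rightarrow> E $ a | Inr b \<Rightarrow> H $ b)"

fun kf :: "real^'n^'n1 \<Rightarrow> real^'n^'n1 \<Rightarrow> real^'q^'n1 \<Rightarrow> real^'n^'m \<Rightarrow>
           real^'n^'n \<Rightarrow> real^'n1^'n1 \<Rightarrow> real^'m^'m \<Rightarrow> real^'n \<Rightarrow>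
           (nat \<Rightarrow> real^'q) \<Rightarrow> (nat \<Rightarrow> real^'m) \<Rightarrow> nat \<Rightarrow> (real^'n) \<times> (real^'n^'n)" where
  "kf E A B H P0 Q R x0 u y 0 = (x0, P0)"
| "kf E A B H P0 Q R x0 u y (Suc k) =
     (let (xh, Pp) = kf E A B H P0 Q R x0 u y k;
          Pm = A ** Pp ** transpose A + Q;
          Pn = matrix_inv (transpose E ** matrix_inv Pm ** E
                           + transpose H ** matrix_inv R ** H)
      in (Pn *v (transpose H *v (matrix_inv R *v y (Suc k)))
          + Pn *v (transpose E *v (matrix_inv Pm *v (A *v xh + B *v u k))), Pn))"

definition xplus where "xplus E A B H P0 Q R x0 u y k = fst (kf E A B H P0 Q R x0 u y k)"
definition Pplus where "Pplus E A B H P0 Q R x0 u y k = snd (kf E A B H P0 Q R x0 u y k)"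
definition Pminus where
  "Pminus E A B H P0 Q R x0 u y k = A ** Pplus E A B H P0 Q R x0 u y k ** transpose A + Q"

definition Gsm where
  "Gsm E A B H P0 Q R x0 u y k =
     matrix_inv (matrix_inv (Pplus E A B H P0 Q R x0 u y k) + transpose A ** matrix_inv Q ** A)"

definition xsm where
  "xsm E A B H P0 Q R x0 u y k xnext =
     xplus E A B H P0 Q R x0 u y k
     + Gsm E A B H P0 Q R x0 u y k *v (transpose A *v (matrix_inv Q *v
          (E *v xnext - A *v xplus E A B H P0 Q R x0 u y k - B *v u k)))"

definition JT where
  "JT E A B H P0 Q R x0 u y T (x :: nat \<Rightarrow> real^'n) =
     wnorm (A ** P0 ** transpose A + Q) (E *v x 1 - A *v x0 - B *v u 0)
     + (\<Sum>k=1..T-1. wnorm Q (E *v x (k+1) - A *v x k - B *v u k))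
     + (\<Sum>k=1..T. wnorm R (y k - H *v x k))"

definition SC where
  "SC E A B H P0 Q R x0 u y T N (x :: nat \<Rightarrow> real^'n) =
     wnorm (Pminus E A B H P0 Q R x0 u y (T-N-1))
       (E *v x (T-N) - A *v xplus E A B H P0 Q R x0 u y (T-N-1) - B *v u (T-N-1))
     + (\<Sum>k=T-N..T-1. wnorm Q (E *v x (k+1) - A *v x k - B *v u k))
     + (\<Sum>k=T-N..T. wnorm R (y k - H *v x k))"

end

theory Submission
  imports Defs
begin

text \<open>
  Each time step consists of two completions of the square. The prior term at time k and the
  measurement term at time k combine, in information form, into the norm of x_k - xhat_k^+ weighted
  by P_k^+, plus a constant. Adding the transition cost from x_k to x_(k+1) and completing the square
  in x_k (with the matrix inversion lemma) splits off the smoothing term weighted by Gamma_k^sm and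
  leaves exactly the prior term of step k+1, weighted by P_k^-. Iterating this for k = 1, ..., T-N-1
  peels the smoothing terms off J_T and leaves the arrival cost SC.
\<close>

(* The default simp rule rewrites transpose M *v x to x v* M, a form the lemmas below avoid. *)
declare transpose_matrix_vector [simp del]

lemma inner_matrix_vector_transpose:
  fixes M :: "real^'n^'m"
  shows "u \<bullet> (M *v v) = (transpose M *v u) \<bullet> v"
  by (simp add: transpose_matrix_vector dot_lmul_matrix)

lemma inner_symmetric_matrix:
  fixes S :: "real^'n^'n"
  assumes "transpose S = S"
  shows "u \<bullet> (S *v v) = v \<bullet> (S *v u)"
  by (metis assms inner_matrix_vector_transpose inner_commute)

lemma inner_congruence:
  fixes M :: "real^'n^'m"
  shows "z \<bullet> ((transpose M ** S ** M) *v w) = (M *v z) \<bullet> (S *v (M *v w))"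
  by (simp add: matrix_vector_mul_assoc[symmetric] inner_matrix_vector_transpose)

lemma quadratic_form_diff:
  fixes S :: "real^'n^'n"
  assumes "transpose S = S"
  shows "(p - q) \<bullet> (S *v (p - q)) = p \<bullet> (S *v p) - 2 * (p \<bullet> (S *v q)) + q \<bullet> (S *v q)"
  using inner_symmetric_matrix[OF assms, of q p]
  by (simp add: matrix_vector_mult_diff_distrib inner_diff_left inner_diff_right)

lemma transpose_add: "transpose (M + N) = transpose M + transpose N"
  by (simp add: transpose_def vec_eq_iff)

lemma matrix_inv_right:
  fixes M :: "'a::field^'n^'n"
  assumes "invertible M"
  shows "M ** matrix_inv M = mat 1"
  using assms unfolding matrix_inv_def invertible_def by (rule someI2_ex) blast

lemma matrix_inv_left:
  fixes M :: "'a::field^'n^'n"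
  assumes "invertible M"
  shows "matrix_inv M ** M = mat 1"
  using matrix_inv_right[OF assms] by (simp add: matrix_left_right_inverse)

lemma matrix_inv_eqI:
  fixes M :: "'a::field^'n^'n"
  assumes "M ** N = mat 1"
  shows "matrix_inv M = N"
proof -
  have "invertible M"
    using assms invertible_right_inverse by blast
  then have "matrix_inv M = matrix_inv M ** (M ** N)"
    by (simp add: assms)
  also have "\<dots> = N"
    by (simp add: matrix_mul_assoc matrix_inv_left \<open>invertible M\<close>)
  finally show ?thesis .
qed

lemma matrix_inv_matrix_inv:
  fixes M :: "'a::field^'n^'n"
  assumes "invertible M"
  shows "matrix_inv (matrix_inv M) = M"
  by (rule matrix_inv_eqI) (rule matrix_inv_left[OF assms])

lemma transpose_matrix_inv:
  fixes M :: "'a::field^'n^'n"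
  assumes "invertible M"
  shows "transpose (matrix_inv M) = matrix_inv (transpose M)"
  by (rule matrix_inv_eqI[symmetric])
     (simp add: matrix_transpose_mul[symmetric] matrix_inv_left[OF assms])

lemma wnorm_matrix_inv:
  fixes S :: "real^'n^'n"
  assumes "invertible S"
  shows "wnorm (matrix_inv S) z = z \<bullet> (S *v z)"
  by (simp add: wnorm_def matrix_inv_matrix_inv[OF assms])

lemma wnorm_commute: "wnorm S (a - b) = wnorm S (b - a)"
  using matrix_vector_mult_diff_distrib[of "matrix_inv S" 0 "a - b"]
  by (simp add: wnorm_def) (metis inner_minus_left minus_diff_eq)

lemma wnorm_affine:
  fixes M :: "real^'n^'m" and S :: "real^'m^'m"
  assumes "transpose (matrix_inv S) = matrix_inv S"
  shows "wnorm S (M *v z - a) = z \<bullet> ((transpose M ** matrix_inv S ** M) *v z)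
           - 2 * (z \<bullet> (transpose M *v (matrix_inv S *v a))) + wnorm S a"
  unfolding wnorm_def quadratic_form_diff[OF assms] inner_congruence
  by (simp add: inner_matrix_vector_transpose)

lemma spd_symmetric: "spd S \<Longrightarrow> transpose S = S"
  by (simp add: spd_def)

lemma spd_nonneg: "spd S \<Longrightarrow> 0 \<le> z \<bullet> (S *v z)"
  unfolding spd_def by (cases "z = 0") (auto intro: less_imp_le)

lemma spd_invertible:
  fixes S :: "real^'n^'n"
  assumes "spd S"
  shows "invertible S"
proof -
  have "S *v z = 0 \<Longrightarrow> z = 0" for z
    using assms unfolding spd_def by (metis inner_zero_right less_irrefl)
  then show ?thesis
    using matrix_left_invertible_ker invertible_left_inverse by blast
qed

lemma spd_matrix_inv:
  fixes S :: "real^'n^'n"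
  assumes "spd S"
  shows "spd (matrix_inv S)"
  unfolding spd_def
proof (intro conjI allI impI)
  have inv: "invertible S"
    using spd_invertible[OF assms] .
  show "transpose (matrix_inv S) = matrix_inv S"
    by (simp add: transpose_matrix_inv[OF inv] spd_symmetric[OF assms])
  fix z :: "real^'n"
  assume "z \<noteq> 0"
  define v where "v = matrix_inv S *v z"
  have z: "z = S *v v"
    by (simp add: v_def matrix_vector_mul_assoc matrix_inv_right[OF inv])
  with \<open>z \<noteq> 0\<close> have "v \<noteq> 0"
    by auto
  then have "0 < v \<bullet> (S *v v)"
    using assms by (simp add: spd_def)
  then show "0 < z \<bullet> (matrix_inv S *v z)"
    unfolding v_def[symmetric] by (subst z) (simp add: inner_commute)
qed

lemma spd_congruence_sum:
  fixes M :: "real^'n^'k" and N :: "real^'n^'l"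
  assumes "spd S" "spd U" and injective: "\<And>z. M *v z = 0 \<Longrightarrow> N *v z = 0 \<Longrightarrow> z = 0"
  shows "spd (transpose M ** S ** M + transpose N ** U ** N)"
  unfolding spd_def
proof (intro conjI allI impI)
  show "transpose (transpose M ** S ** M + transpose N ** U ** N)
      = transpose M ** S ** M + transpose N ** U ** N"
    using assms(1,2)
    by (simp add: transpose_add matrix_transpose_mul matrix_mul_assoc spd_symmetric)
  fix z :: "real^'n"
  assume "z \<noteq> 0"
  have "0 < (M *v z) \<bullet> (S *v (M *v z)) \<or> 0 < (N *v z) \<bullet> (U *v (N *v z))"
    using injective[of z] \<open>z \<noteq> 0\<close> assms(1,2) by (auto simp: spd_def)
  moreover have "0 \<le> (M *v z) \<bullet> (S *v (M *v z))" "0 \<le> (N *v z) \<bullet> (U *v (N *v z))"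
    using assms(1,2) by (simp_all add: spd_nonneg)
  moreover have "z \<bullet> ((transpose M ** S ** M + transpose N ** U ** N) *v z)
      = (M *v z) \<bullet> (S *v (M *v z)) + (N *v z) \<bullet> (U *v (N *v z))"
    by (simp only: matrix_vector_mult_add_rdistrib inner_add_right inner_congruence)
  ultimately show "0 < z \<bullet> ((transpose M ** S ** M + transpose N ** U ** N) *v z)"
    by linarith
qed

lemma spd_congruence_add:
  fixes A :: "real^'n^'k"
  assumes "spd P" "spd Q"
  shows "spd (A ** P ** transpose A + Q)"
  using spd_congruence_sum[OF assms, of "transpose A" "mat 1"] by simp

lemma matrix_inv_woodbury:
  fixes A :: "'a::field^'n^'m" and K :: "'a^'n^'n" and Q :: "'a^'m^'m"
  assumes "invertible K" "invertible Q" "invertible (K + transpose A ** matrix_inv Q ** A)"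
  shows "matrix_inv (A ** matrix_inv K ** transpose A + Q)
    = matrix_inv Q - matrix_inv Q ** A ** matrix_inv (K + transpose A ** matrix_inv Q ** A)
        ** transpose A ** matrix_inv Q"
proof (rule matrix_inv_eqI)
  define Qi where "Qi = matrix_inv Q"
  define Ki where "Ki = matrix_inv K"
  define G where "G = matrix_inv (K + transpose A ** Qi ** A)"
  have "(A ** Ki ** transpose A + Q) ** (Qi - Qi ** A ** G ** transpose A ** Qi) *v v = v" for v
  proof -
    define t where "t = transpose A *v (Qi *v v)"
    define g where "g = G *v t"
    have "(K + transpose A ** Qi ** A) *v g = t"
      by (simp only: g_def G_def matrix_vector_mul_assoc matrix_inv_right[OF assms(3)[folded Qi_def]]
          matrix_vector_mul_lid)
    then have "K *v g + transpose A *v (Qi *v (A *v g)) = t"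
      by (simp only: matrix_vector_mult_add_rdistrib matrix_vector_mul_assoc[symmetric])
    then have Ki_t: "Ki *v t = g + Ki *v (transpose A *v (Qi *v (A *v g)))"
      using matrix_inv_left[OF assms(1)]
      by (metis Ki_def matrix_vector_mul_assoc matrix_vector_mul_lid matrix_vector_right_distrib)
    have Q_Qi: "Q *v (Qi *v w) = w" for w
      by (simp add: Qi_def matrix_vector_mul_assoc matrix_inv_right[OF assms(2)])
    have "(A ** Ki ** transpose A + Q) ** (Qi - Qi ** A ** G ** transpose A ** Qi) *v v
        = A *v (Ki *v t) - A *v (Ki *v (transpose A *v (Qi *v (A *v g))))
          + Q *v (Qi *v v) - Q *v (Qi *v (A *v g))"
      by (simp add: t_def g_def matrix_vector_mul_assoc[symmetric] matrix_vector_mult_add_rdistrib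
          matrix_vector_mult_diff_rdistrib matrix_vector_mult_diff_distrib)
    also have "\<dots> = v"
      by (simp add: Ki_t Q_Qi matrix_vector_right_distrib)
    finally show ?thesis .
  qed
  then show "(A ** matrix_inv K ** transpose A + Q) ** (matrix_inv Q - matrix_inv Q ** A **
      matrix_inv (K + transpose A ** matrix_inv Q ** A) ** transpose A ** matrix_inv Q) = mat 1"
    by (simp add: matrix_eq Qi_def Ki_def G_def)
qed

lemma stack_mult_vector_eq_0_iff:
  "stack E H *v z = 0 \<longleftrightarrow> E *v z = 0 \<and> H *v z = 0"
proof -
  have "(stack E H *v z) $ Inl a = (E *v z) $ a" "(stack E H *v z) $ Inr b = (H *v z) $ b" for a b
    by (simp_all add: matrix_vector_mult_def stack_def)
  then show ?thesis
    by (auto simp: vec_eq_iff split: sum.split) (metis sum.exhaust)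
qed

lemma full_rank_stack_injective:
  fixes E :: "real^'n^'a" and H :: "real^'n^'b"
  assumes "rank (stack E H) = CARD('n)" "E *v z = 0" "H *v z = 0"
  shows "z = 0"
proof -
  have "inj ((*v) (stack E H))"
    using assms(1) full_rank_injective by blast
  moreover have "stack E H *v z = stack E H *v 0"
    using assms(2,3) stack_mult_vector_eq_0_iff[of E H z] by simp
  ultimately show ?thesis
    by (rule injD)
qed

lemma wnorm_measurement_update:
  fixes E :: "real^'n^'k" and H :: "real^'n^'l" and Pm :: "real^'k^'k" and R :: "real^'l^'l"
    and a :: "real^'k" and yv :: "real^'l"
  assumes "spd Pm" "spd R" and injective: "\<And>z. E *v z = 0 \<Longrightarrow> H *v z = 0 \<Longrightarrow> z = 0"
    and Pn_def: "Pn = matrix_inv (transpose E ** matrix_inv Pm ** E + transpose H ** matrix_inv R ** H)"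
    and xh_def: "xh = Pn *v (transpose H *v (matrix_inv R *v yv))
                      + Pn *v (transpose E *v (matrix_inv Pm *v a))"
  shows "\<exists>c. \<forall>z. wnorm Pm (E *v z - a) + wnorm R (yv - H *v z) = wnorm Pn (z - xh) + c"
proof -
  define K where "K = transpose E ** matrix_inv Pm ** E + transpose H ** matrix_inv R ** H"
  define b where "b = transpose E *v (matrix_inv Pm *v a) + transpose H *v (matrix_inv R *v yv)"
  have "spd K"
    unfolding K_def using assms(1,2) injective by (intro spd_congruence_sum spd_matrix_inv)
  then have K: "invertible K" "transpose K = K"
    by (simp_all add: spd_invertible spd_symmetric)
  have sym: "transpose (matrix_inv Pm) = matrix_inv Pm" "transpose (matrix_inv R) = matrix_inv R"
    using assms(1,2) by (simp_all add: spd_matrix_inv spd_symmetric)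
  have "K *v (matrix_inv K *v w) = w" for w
    by (simp add: matrix_vector_mul_assoc matrix_inv_right[OF K(1)])
  then have "K *v xh = b"
    by (simp add: xh_def Pn_def K_def[symmetric] b_def matrix_vector_right_distrib add.commute
       )
  show ?thesis
  proof (intro exI allI)
    fix z
    have "wnorm Pm (E *v z - a) + wnorm R (yv - H *v z)
        = z \<bullet> (K *v z) - 2 * (z \<bullet> b) + wnorm Pm a + wnorm R yv"
      unfolding wnorm_commute[of R yv] wnorm_affine[OF sym(1)] wnorm_affine[OF sym(2)]
      by (simp add: K_def b_def matrix_vector_mult_add_rdistrib inner_add_right)
    also have "\<dots> = wnorm Pn (z - xh) + (wnorm Pm a + wnorm R yv - xh \<bullet> (K *v xh))"
      unfolding Pn_def K_def[symmetric] wnorm_matrix_inv[OF K(1)] quadratic_form_diff[OF K(2)]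
        \<open>K *v xh = b\<close>
      by simp
    finally show "wnorm Pm (E *v z - a) + wnorm R (yv - H *v z)
        = wnorm Pn (z - xh) + (wnorm Pm a + wnorm R yv - xh \<bullet> (K *v xh))" .
  qed
qed

lemma wnorm_time_update:
  fixes A :: "real^'n^'k" and Pn :: "real^'n^'n" and Q :: "real^'k^'k"
  assumes "spd Pn" "spd Q"
  defines "G \<equiv> matrix_inv (matrix_inv Pn + transpose A ** matrix_inv Q ** A)"
  shows "wnorm Pn d + wnorm Q (s - A *v d)
    = wnorm G (d - G *v (transpose A *v (matrix_inv Q *v s))) + wnorm (A ** Pn ** transpose A + Q) s"
proof -
  define K where "K = matrix_inv Pn"
  define M where "M = K + transpose A ** matrix_inv Q ** A"
  define v where "v = transpose A *v (matrix_inv Q *v s)"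
  define e where "e = G *v v"
  have "spd K"
    unfolding K_def using assms(1) by (rule spd_matrix_inv)
  then have "spd M"
    unfolding M_def using spd_congruence_sum[of K "matrix_inv Q" "mat 1" A] spd_matrix_inv[OF assms(2)]
    by simp
  then have M: "invertible M" "transpose M = M"
    by (simp_all add: spd_invertible spd_symmetric)
  have Qi: "invertible Q" "transpose (matrix_inv Q) = matrix_inv Q"
    using assms(2) by (simp_all add: spd_invertible spd_matrix_inv spd_symmetric)
  have Pn: "Pn = matrix_inv K"
    unfolding K_def using matrix_inv_matrix_inv[OF spd_invertible[OF assms(1)]] by simp
  have "M *v e = v"
    by (simp add: e_def G_def K_def[symmetric] M_def[symmetric] matrix_vector_mul_assoc
        matrix_inv_right[OF M(1)])
  have "wnorm Pn d + wnorm Q (s - A *v d) = d \<bullet> (M *v d) - 2 * (d \<bullet> v) + wnorm Q s"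
    unfolding wnorm_commute[of Q s] wnorm_affine[OF Qi(2)]
    by (simp add: wnorm_def K_def M_def v_def matrix_vector_mult_add_rdistrib inner_add_right
       )
  also have "\<dots> = wnorm G (d - e) + (wnorm Q s - e \<bullet> v)"
    unfolding G_def K_def[symmetric] M_def[symmetric] wnorm_matrix_inv[OF M(1)] quadratic_form_diff[OF M(2)]
      \<open>M *v e = v\<close>
    by (simp add: inner_commute)
  also have "wnorm Q s - e \<bullet> v = wnorm (A ** Pn ** transpose A + Q) s"
  proof -
    have "s \<bullet> (matrix_inv Q *v (A *v e)) = (A *v e) \<bullet> (matrix_inv Q *v s)"
      by (rule inner_symmetric_matrix[OF Qi(2)])
    also have "\<dots> = e \<bullet> v"
      by (simp add: v_def inner_matrix_vector_transpose[of e "transpose A"])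
    finally have "s \<bullet> (matrix_inv Q *v (A *v e)) = e \<bullet> v" .
    moreover have "matrix_inv (A ** Pn ** transpose A + Q)
        = matrix_inv Q - matrix_inv Q ** A ** G ** transpose A ** matrix_inv Q"
      unfolding G_def K_def[symmetric] unfolding Pn
      using matrix_inv_woodbury[OF spd_invertible[OF \<open>spd K\<close>] Qi(1) M(1)[unfolded M_def]] .
    ultimately show ?thesis
      by (simp add: wnorm_def e_def v_def G_def K_def[symmetric] matrix_vector_mult_diff_rdistrib
          inner_diff_right matrix_vector_mul_assoc[symmetric])
  qed
  finally show ?thesis
    by (simp add: e_def v_def)
qed

lemma wnorm_filter_smoother_step:
  fixes E A :: "real^'n^'k" and H :: "real^'n^'l" and Pm Q :: "real^'k^'k" and R :: "real^'l^'l"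
    and a b :: "real^'k" and yv :: "real^'l"
  assumes "spd Pm" "spd Q" "spd R" and injective: "\<And>z. E *v z = 0 \<Longrightarrow> H *v z = 0 \<Longrightarrow> z = 0"
    and Pn_def: "Pn = matrix_inv (transpose E ** matrix_inv Pm ** E + transpose H ** matrix_inv R ** H)"
    and xh_def: "xh = Pn *v (transpose H *v (matrix_inv R *v yv))
                      + Pn *v (transpose E *v (matrix_inv Pm *v a))"
    and G_def: "G = matrix_inv (matrix_inv Pn + transpose A ** matrix_inv Q ** A)"
  shows "\<exists>c. \<forall>z w. wnorm Pm (E *v z - a) + wnorm R (yv - H *v z) + wnorm Q (E *v w - A *v z - b)
    = wnorm G (z - (xh + G *v (transpose A *v (matrix_inv Q *v (E *v w - A *v xh - b)))))
      + wnorm (A ** Pn ** transpose A + Q) (E *v w - A *v xh - b) + c"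
proof -
  obtain c where c: "\<forall>z. wnorm Pm (E *v z - a) + wnorm R (yv - H *v z) = wnorm Pn (z - xh) + c"
    using wnorm_measurement_update[OF assms(1,3) injective Pn_def xh_def] by blast
  have "spd Pn"
    unfolding Pn_def using assms(1,3) injective by (intro spd_matrix_inv spd_congruence_sum)
  show ?thesis
  proof (intro exI allI)
    fix z w
    define s where "s = E *v w - A *v xh - b"
    have "E *v w - A *v z - b = s - A *v (z - xh)"
      by (simp add: s_def matrix_vector_mult_diff_distrib algebra_simps)
    then show "wnorm Pm (E *v z - a) + wnorm R (yv - H *v z) + wnorm Q (E *v w - A *v z - b)
      = wnorm G (z - (xh + G *v (transpose A *v (matrix_inv Q *v s))))
        + wnorm (A ** Pn ** transpose A + Q) s + c"
      using c wnorm_time_update[OF \<open>spd Pn\<close> assms(2), of "z - xh" s A, folded G_def]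
      by (simp add: diff_diff_eq)
  qed
qed

lemma Pplus_0 [simp]: "Pplus E A B H P0 Q R x0 u y 0 = P0"
  and xplus_0 [simp]: "xplus E A B H P0 Q R x0 u y 0 = x0"
  by (simp_all add: Pplus_def xplus_def)

lemma Pplus_Suc:
  "Pplus E A B H P0 Q R x0 u y (Suc k) =
      matrix_inv (transpose E ** matrix_inv (Pminus E A B H P0 Q R x0 u y k) ** E
                  + transpose H ** matrix_inv R ** H)"
  and xplus_Suc:
  "xplus E A B H P0 Q R x0 u y (Suc k) =
      Pplus E A B H P0 Q R x0 u y (Suc k) *v (transpose H *v (matrix_inv R *v y (Suc k)))
      + Pplus E A B H P0 Q R x0 u y (Suc k) *v (transpose E *v (matrix_inv (Pminus E A B H P0 Q R x0 u y k) *v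
          (A *v xplus E A B H P0 Q R x0 u y k + B *v u k)))"
  by (cases "kf E A B H P0 Q R x0 u y k"; simp add: Pplus_def xplus_def Pminus_def Let_def)+

locale descriptor_estimation =
  fixes E A :: "real^'n^'n1" and B :: "real^'q^'n1" and H :: "real^'n^'m"
    and P0 :: "real^'n^'n" and Q :: "real^'n1^'n1" and R :: "real^'m^'m"
    and x0 :: "real^'n" and u :: "nat \<Rightarrow> real^'q" and y :: "nat \<Rightarrow> real^'m"
  assumes stack_injective: "\<And>z. E *v z = 0 \<Longrightarrow> H *v z = 0 \<Longrightarrow> z = 0"
    and spd_P0: "spd P0" and spd_Q: "spd Q" and spd_R: "spd R"
begin

abbreviation "xp \<equiv> xplus E A B H P0 Q R x0 u y"
abbreviation "Pp \<equiv> Pplus E A B H P0 Q R x0 u y"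
abbreviation "Pm \<equiv> Pminus E A B H P0 Q R x0 u y"
abbreviation "Gs \<equiv> Gsm E A B H P0 Q R x0 u y"
abbreviation "xs \<equiv> xsm E A B H P0 Q R x0 u y"

lemma spd_Pplus: "spd (Pp k)"
proof (induction k)
  case 0
  show ?case by (simp add: spd_P0)
next
  case (Suc k)
  then have "spd (Pm k)"
    unfolding Pminus_def using spd_Q by (rule spd_congruence_add)
  then show ?case
    unfolding Pplus_Suc using spd_R stack_injective by (intro spd_matrix_inv spd_congruence_sum)
qed

lemma spd_Pminus: "spd (Pm k)"
  unfolding Pminus_def using spd_Pplus spd_Q by (rule spd_congruence_add)

definition arrival_cost :: "nat \<Rightarrow> nat \<Rightarrow> (nat \<Rightarrow> real^'n) \<Rightarrow> real" where
  "arrival_cost T j x =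
     wnorm (Pm j) (E *v x (Suc j) - A *v xp j - B *v u j)
     + (\<Sum>k=Suc j..T-1. wnorm Q (E *v x (k+1) - A *v x k - B *v u k))
     + (\<Sum>k=Suc j..T. wnorm R (y k - H *v x k))"

lemma JT_eq_arrival_cost: "JT E A B H P0 Q R x0 u y T x = arrival_cost T 0 x"
  by (simp add: JT_def arrival_cost_def Pminus_def)

lemma SC_eq_arrival_cost:
  assumes "N < T"
  shows "SC E A B H P0 Q R x0 u y T N x = arrival_cost T (T - N - 1) x"
proof -
  have "Suc (T - N - 1) = T - N"
    using assms by linarith
  then show ?thesis
    by (simp add: SC_def arrival_cost_def)
qed

lemma arrival_cost_Suc:
  assumes "j + 2 \<le> T"
  shows "\<exists>c. \<forall>x. arrival_cost T j x
    = wnorm (Gs (Suc j)) (x (Suc j) - xs (Suc j) (x (Suc (Suc j)))) + arrival_cost T (Suc j) x + c"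
proof -
  obtain c where c: "\<forall>z w. wnorm (Pm j) (E *v z - (A *v xp j + B *v u j)) + wnorm R (y (Suc j) - H *v z)
      + wnorm Q (E *v w - A *v z - B *v u (Suc j))
    = wnorm (Gs (Suc j)) (z - xs (Suc j) w)
      + wnorm (Pm (Suc j)) (E *v w - A *v xp (Suc j) - B *v u (Suc j)) + c"
    using wnorm_filter_smoother_step[OF spd_Pminus spd_Q spd_R stack_injective
        Pplus_Suc[where k = j] xplus_Suc[where k = j] Gsm_def, where b = "B *v u (Suc j)"]
    unfolding xsm_def Pminus_def by blast
  show ?thesis
  proof (intro exI allI)
    fix x :: "nat \<Rightarrow> real^'n"
    have "{Suc j..T - 1} = insert (Suc j) {Suc (Suc j)..T - 1}" "{Suc j..T} = insert (Suc j) {Suc (Suc j)..T}"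
      using assms by auto
    then show "arrival_cost T j x
      = wnorm (Gs (Suc j)) (x (Suc j) - xs (Suc j) (x (Suc (Suc j)))) + arrival_cost T (Suc j) x + c"
      using c[rule_format, of "x (Suc j)" "x (Suc (Suc j))"]
      by (simp add: arrival_cost_def diff_diff_eq)
  qed
qed

lemma JT_eq_smoothing_terms_plus_arrival_cost:
  assumes "m < T"
  shows "\<exists>c. \<forall>x. JT E A B H P0 Q R x0 u y T x
    = (\<Sum>k=1..m. wnorm (Gs k) (x k - xs k (x (k+1)))) + arrival_cost T m x + c"
  using assms
proof (induction m)
  case 0
  show ?case
    by (simp add: JT_eq_arrival_cost)
next
  case (Suc m)
  then obtain c1 where c1: "\<forall>x. JT E A B H P0 Q R x0 u y T x
      = (\<Sum>k=1..m. wnorm (Gs k) (x k - xs k (x (k+1)))) + arrival_cost T m x + c1"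
    by auto
  obtain c2 where c2: "\<forall>x. arrival_cost T m x
      = wnorm (Gs (Suc m)) (x (Suc m) - xs (Suc m) (x (Suc (Suc m)))) + arrival_cost T (Suc m) x + c2"
    using arrival_cost_Suc Suc.prems by fastforce
  show ?case
    using c1 c2 by (intro exI[of _ "c1 + c2"]) simp
qed

end

theorem theorem3:
  fixes E A :: "real^'n^'n1" and B :: "real^'q^'n1" and H :: "real^'n^'m"
    and P0 :: "real^'n^'n" and Q :: "real^'n1^'n1" and R :: "real^'m^'m"
    and x0 :: "real^'n" and u :: "nat \<Rightarrow> real^'q" and y :: "nat \<Rightarrow> real^'m"
    and T N :: nat
  assumes "rank (stack E H) = CARD('n)"
    and "spd P0" and "spd Q" and "spd R"
    and "1 \<le> N" and "N \<le> T - 1"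
  shows "\<exists>c::real. \<forall>x :: nat \<Rightarrow> real^'n.
           JT E A B H P0 Q R x0 u y T x =
             (\<Sum>k=1..T-N-1. wnorm (Gsm E A B H P0 Q R x0 u y k)
                               (x k - xsm E A B H P0 Q R x0 u y k (x (k+1))))
             + SC E A B H P0 Q R x0 u y T N x + c"
proof -
  interpret descriptor_estimation E A B H P0 Q R x0 u y
    using assms(1-4) by unfold_locales (auto intro: full_rank_stack_injective)
  have "N < T"
    using assms(5,6) by linarith
  then show ?thesis
    using JT_eq_smoothing_terms_plus_arrival_cost[of "T - N - 1" T] SC_eq_arrival_cost by auto
qed

end
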